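(* Let $G=\mathrm{Cay}(\Gamma,S)$ be a Cayley graph with $D=|S|$. Then for every finite nonempty set $K\subset V$, $$\frac{|\partial_E K|}{D|K|}\geq\frac{1}{16\,\overline{R}(2|K|)},$$ with the convention $1/\infty=0$.
   Context: $S$ is a finite symmetric generating set of $\Gamma$, $V=\Gamma$, and $\partial_E K=\{\{x,y\}\in E: x\in K, y\notin K\}$ is the edge boundary. Define $\mathcal{B}(n)=\min_H|B_H(o,n)|$, where the minimum ranges over all Cayley graphs $H=\mathrm{Cay}(\Gamma',S')$ with $S'\subseteq S$ symmetric, $|S'|\ge |S|/2$, and $\Gamma'$ the subgroup of $\Gamma$ generated by $S'$; $B_H(o,n)$ is the ball of radius $n$ about the identity $o$ in $H$. Define $\overline{R}(m)=\min\{n\ge1:\mathcal{B}(n)\ge m\}$, with $\overline{R}(m)=\infty$ if $\mathcal{B}(n)<m$ for all $n\ge1$. *)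

theory Defs
  imports "HOL-Algebra.Generated_Groups" "HOL-Library.Extended_Nat" Complex_Main
begin

definition symmetric_set :: "('a, 'b) monoid_scheme \<Rightarrow> 'a set \<Rightarrow> bool" where
  "symmetric_set G S \<longleftrightarrow> (\<forall>s\<in>S. inv\<^bsub>G\<^esub> s \<in> S)"

definition cay_edges :: "('a, 'b) monoid_scheme \<Rightarrow> 'a set \<Rightarrow> 'a set set" where
  "cay_edges G S = {{x, x \<otimes>\<^bsub>G\<^esub> s} | x s. x \<in> carrier G \<and> s \<in> S}"

definition edge_boundary :: "('a, 'b) monoid_scheme \<Rightarrow> 'a set \<Rightarrow> 'a set \<Rightarrow> 'a set set" where
  "edge_boundary G S K = {e \<in> cay_edges G S. \<exists>x y. e = {x, y} \<and> x \<in> K \<and> y \<notin> K}"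

text \<open>Ball of radius n about the identity in the Cayley graph of the subgroup generated by S'
  (word metric: products of at most n generators).\<close>
definition cay_ball :: "('a, 'b) monoid_scheme \<Rightarrow> 'a set \<Rightarrow> nat \<Rightarrow> 'a set" where
  "cay_ball G S' n = {foldr (\<otimes>\<^bsub>G\<^esub>) xs \<one>\<^bsub>G\<^esub> | xs. set xs \<subseteq> S' \<and> length xs \<le> n}"

definition calB :: "('a, 'b) monoid_scheme \<Rightarrow> 'a set \<Rightarrow> nat \<Rightarrow> nat" where
  "calB G S n = Min {card (cay_ball G S' n) | S'. S' \<subseteq> S \<and> symmetric_set G S' \<and> 2 * card S' \<ge> card S}"

definition Rbar :: "('a, 'b) monoid_scheme \<Rightarrow> 'a set \<Rightarrow> nat \<Rightarrow> enat" where
  "Rbar G S m = (if \<exists>n\<ge>1. calB G S n \<ge> m then enat (LEAST n. n \<ge> 1 \<and> calB G S n \<ge> m) else \<infinity>)"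

definition inv16 :: "enat \<Rightarrow> real" where
  "inv16 r = (case r of enat k \<Rightarrow> 1 / (16 * real k) | \<infinity> \<Rightarrow> 0)"

end

theory Submission
  imports Defs
begin

(* Let N(g) = escapes G K g be the number of x \<in> K with x g \<notin> K. N is subadditive along
   words and invariant under inversion, and each pair (s, x) counted by \<Sigma> = (\<Sum>s\<in>S. N s)
   gives a distinct boundary edge {x, x s}, so \<Sigma> \<le> |\<partial>K|. By Markov's inequality the
   generators with N(s) |S| \<le> 2 \<Sigma> form a symmetric set S' containing at least half of S, so
   for n = Rbar(2|K|) the ball B of radius n in S' has at least 2|K| elements. Double counting
   the pairs (g, x) \<in> B \<times> K with x g \<in> K yields some g \<in> B with N(g) \<ge> |K|/2, while g is a
   word of at most n letters from S', so N(g) |S| \<le> 2 n \<Sigma>. Hence |K| |S| \<le> 4 n |\<partial>K|. *)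

lemma sum_card_filter_swap:
  assumes "finite A" "finite B"
  shows "(\<Sum>a\<in>A. card {b\<in>B. P a b}) = (\<Sum>b\<in>B. card {a\<in>A. P a b})"
proof -
  have "card {b\<in>B. P a b} = (\<Sum>b\<in>B. if P a b then 1 else 0)" for a
    using assms(2) by (simp add: sum.If_cases Int_def)
  moreover have "card {a\<in>A. P a b} = (\<Sum>a\<in>A. if P a b then 1 else 0)" for b
    using assms(1) by (simp add: sum.If_cases Int_def)
  ultimately show ?thesis by (simp add: sum.swap[of _ A])
qed

lemma markov_card_half:
  fixes f :: "'a \<Rightarrow> nat"
  assumes "finite S"
  shows "card S \<le> 2 * card {s\<in>S. f s * card S \<le> 2 * sum f S}"
proof -
  let ?L = "{s\<in>S. f s * card S \<le> 2 * sum f S}" and ?H = "{s\<in>S. \<not> f s * card S \<le> 2 * sum f S}"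
  have split: "card S = card ?L + card ?H"
    using assms by (subst card_Un_disjoint[symmetric]) (auto intro: arg_cong[where f = card])
  have "card ?H * (2 * sum f S) \<le> sum f ?H * card S"
    using sum_mono[of ?H "\<lambda>_. 2 * sum f S" "\<lambda>s. f s * card S"] by (simp add: sum_distrib_right)
  also have "\<dots> \<le> sum f S * card S"
    using assms by (intro mult_le_mono1 sum_mono2) auto
  finally have "card ?H * 2 \<le> card S \<or> sum f S = 0" by (auto simp: mult.commute)
  moreover have "sum f S = 0 \<Longrightarrow> card ?H = 0" using assms by auto
  ultimately have "2 * card ?H \<le> card S" by (metis mult.commute mult_0_right le0)
  with split show ?thesis by linarith
qed

definition escapes :: "('a, 'b) monoid_scheme \<Rightarrow> 'a set \<Rightarrow> 'a \<Rightarrow> nat" where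
  "escapes G K g = card {x\<in>K. x \<otimes>\<^bsub>G\<^esub> g \<notin> K}"

lemma foldr_mult_closed:
  assumes "monoid G" "set xs \<subseteq> carrier G"
  shows "foldr (\<otimes>\<^bsub>G\<^esub>) xs \<one>\<^bsub>G\<^esub> \<in> carrier G"
  using assms(2) by (induction xs) (auto intro: monoid.m_closed[OF assms(1)] monoid.one_closed[OF assms(1)])

lemma cay_ball_subset_carrier:
  assumes "monoid G" "S' \<subseteq> carrier G"
  shows "cay_ball G S' n \<subseteq> carrier G"
proof
  fix g assume "g \<in> cay_ball G S' n"
  then obtain xs where "g = foldr (\<otimes>\<^bsub>G\<^esub>) xs \<one>\<^bsub>G\<^esub>" "set xs \<subseteq> S'"
    unfolding cay_ball_def by blast
  then show "g \<in> carrier G" using foldr_mult_closed[OF assms(1), of xs] assms(2) by blast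
qed

context group begin

lemma escapes_eq_card_diff:
  assumes "finite K"
  shows "escapes G K g = card K - card {x\<in>K. x \<otimes> g \<in> K}"
proof -
  have "{x\<in>K. x \<otimes> g \<notin> K} = K - {x\<in>K. x \<otimes> g \<in> K}" by blast
  then show ?thesis unfolding escapes_def using assms by (simp add: card_Diff_subset)
qed

lemma escapes_mult_le:
  assumes "a \<in> carrier G" "b \<in> carrier G" "K \<subseteq> carrier G" "finite K"
  shows "escapes G K (a \<otimes> b) \<le> escapes G K a + escapes G K b"
proof -
  let ?A = "{x\<in>K. x \<otimes> a \<notin> K}" and ?C = "{x\<in>K. x \<otimes> a \<in> K \<and> (x \<otimes> a) \<otimes> b \<notin> K}"
  have "{x\<in>K. x \<otimes> (a \<otimes> b) \<notin> K} \<subseteq> ?A \<union> ?C"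
    using assms by (auto simp: m_assoc)
  then have "escapes G K (a \<otimes> b) \<le> card (?A \<union> ?C)"
    unfolding escapes_def using assms(4) by (intro card_mono) auto
  also have "\<dots> \<le> card ?A + card ?C" by (rule card_Un_le)
  finally have "escapes G K (a \<otimes> b) \<le> card ?A + card ?C" .
  moreover have "card ?C \<le> escapes G K b"
    unfolding escapes_def
  proof (rule card_inj_on_le[where f = "\<lambda>x. x \<otimes> a"])
    show "inj_on (\<lambda>x. x \<otimes> a) ?C"
      using assms by (auto intro!: inj_onI) (metis right_cancel subsetD)
  qed (use assms(4) in auto)
  ultimately show ?thesis unfolding escapes_def by simp
qed

lemma escapes_word_le:
  assumes "set xs \<subseteq> carrier G" "K \<subseteq> carrier G" "finite K"
  shows "escapes G K (foldr (\<otimes>) xs \<one>) \<le> sum_list (map (escapes G K) xs)"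
  using assms(1)
proof (induction xs)
  case Nil
  have "{x\<in>K. x \<otimes> \<one> \<notin> K} = {}" using assms(2) by (auto simp: subset_iff)
  then have "escapes G K \<one> = 0" by (simp only: escapes_def card.empty)
  then show ?case by simp
next
  case (Cons s xs)
  then have "escapes G K (foldr (\<otimes>) (s # xs) \<one>) \<le> escapes G K s + escapes G K (foldr (\<otimes>) xs \<one>)"
    using assms by (auto intro!: escapes_mult_le foldr_mult_closed is_monoid)
  with Cons show ?case by simp
qed

lemma escapes_inv:
  assumes "s \<in> carrier G" "K \<subseteq> carrier G" "finite K"
  shows "escapes G K (inv s) = escapes G K s"
proof -
  have "bij_betw (\<lambda>x. x \<otimes> s) {x\<in>K. x \<otimes> s \<in> K} {y\<in>K. y \<otimes> inv s \<in> K}"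
  proof (rule bij_betw_byWitness[where f' = "\<lambda>y. y \<otimes> inv s"])
  qed (use assms in \<open>auto simp: m_assoc\<close>)
  then show ?thesis
    using assms by (simp add: escapes_eq_card_diff bij_betw_same_card)
qed

lemma exists_escapes_ge_half:
  assumes "B \<subseteq> carrier G" "finite B" "K \<subseteq> carrier G" "finite K" "K \<noteq> {}"
    and "2 * card K \<le> card B"
  shows "\<exists>g\<in>B. card K \<le> 2 * escapes G K g"
proof (rule ccontr)
  assume no_large: "\<not> ?thesis"
  have stay: "card K < 2 * card {x\<in>K. x \<otimes> g \<in> K}" if "g \<in> B" for g
  proof -
    have "card {x\<in>K. x \<otimes> g \<in> K} \<le> card K" using assms(4) by (rule card_mono) auto
    moreover have "\<not> card K \<le> 2 * (card K - card {x\<in>K. x \<otimes> g \<in> K})"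
      using no_large that assms(4) by (simp add: escapes_eq_card_diff)
    ultimately show ?thesis by linarith
  qed
  have "B \<noteq> {}" using assms(4-6) by auto
  then have "card B * card K < (\<Sum>g\<in>B. 2 * card {x\<in>K. x \<otimes> g \<in> K})"
    using sum_strict_mono[OF assms(2), of "\<lambda>_. card K"] stay by simp
  also have "\<dots> = 2 * (\<Sum>g\<in>B. card {x\<in>K. x \<otimes> g \<in> K})"
    by (rule sum_distrib_left[symmetric])
  also have "\<dots> = 2 * (\<Sum>x\<in>K. card {g\<in>B. x \<otimes> g \<in> K})"
    by (subst sum_card_filter_swap[OF assms(2,4)]) (rule refl)
  also have "\<dots> \<le> 2 * (\<Sum>x\<in>K. card K)"
  proof -
    have "card {g\<in>B. x \<otimes> g \<in> K} \<le> card K" if "x \<in> K" for x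
    proof (rule card_inj_on_le[where f = "\<lambda>g. x \<otimes> g"])
      show "inj_on (\<lambda>g. x \<otimes> g) {g\<in>B. x \<otimes> g \<in> K}"
        using assms(1,3) that by (auto intro!: inj_onI) (metis Units_eq Units_l_cancel subsetD)
    qed (use assms(4) in auto)
    then have "(\<Sum>x\<in>K. card {g\<in>B. x \<otimes> g \<in> K}) \<le> (\<Sum>x\<in>K. card K)" by (rule sum_mono)
    then show ?thesis by (rule mult_le_mono2)
  qed
  finally have "card B * card K < 2 * card K * card K" by simp
  moreover have "2 * card K * card K \<le> card B * card K"
    using assms(6) by (rule mult_le_mono1)
  ultimately show False by linarith
qed

lemma escapes_ball_le:
  assumes "g \<in> cay_ball G S' n" "S' \<subseteq> carrier G" "K \<subseteq> carrier G" "finite K"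
    and "\<And>s. s \<in> S' \<Longrightarrow> escapes G K s * d \<le> c"
  shows "escapes G K g * d \<le> n * c"
proof -
  obtain xs where xs: "g = foldr (\<otimes>) xs \<one>" "set xs \<subseteq> S'" "length xs \<le> n"
    using assms(1) unfolding cay_ball_def by blast
  have "escapes G K g * d \<le> (\<Sum>s\<leftarrow>xs. escapes G K s) * d"
    using xs assms(2-4) escapes_word_le[of xs K] by (intro mult_le_mono1) auto
  also have "\<dots> = (\<Sum>s\<leftarrow>xs. escapes G K s * d)" by (rule sum_list_mult_const[symmetric])
  also have "\<dots> \<le> (\<Sum>s\<leftarrow>xs. c)" using xs(2) assms(5) by (intro sum_list_mono) auto
  also have "\<dots> \<le> n * c" using xs(3) by (simp add: sum_list_triv)
  finally show ?thesis .
qed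

lemma symmetric_set_escapes_filter:
  assumes "symmetric_set G S" "S \<subseteq> carrier G" "K \<subseteq> carrier G" "finite K"
  shows "symmetric_set G {s\<in>S. P (escapes G K s)}"
  using assms escapes_inv unfolding symmetric_set_def by auto

lemma edge_boundary_subset_image:
  assumes "symmetric_set G S" "S \<subseteq> carrier G"
  shows "edge_boundary G S K \<subseteq> (\<lambda>(y, s). {y, y \<otimes> s}) ` (K \<times> S)"
proof
  fix e assume "e \<in> edge_boundary G S K"
  then obtain x s a b where e: "e = {x, x \<otimes> s}" "x \<in> carrier G" "s \<in> S"
    and ab: "e = {a, b}" "a \<in> K" "b \<notin> K"
    unfolding edge_boundary_def cay_edges_def by blast
  show "e \<in> (\<lambda>(y, s). {y, y \<otimes> s}) ` (K \<times> S)"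
  proof (cases "x = a")
    case True
    then show ?thesis using e ab by force
  next
    case False
    then have "x = b" "x \<otimes> s = a" using e ab by (auto simp: doubleton_eq_iff)
    moreover have "inv s \<in> S" using assms(1) e(3) unfolding symmetric_set_def by blast
    moreover have "a \<otimes> inv s = x" using calculation e assms(2) by (auto simp: m_assoc)
    ultimately have "e = {a, a \<otimes> inv s}" using e by auto
    then show ?thesis using ab \<open>inv s \<in> S\<close> by force
  qed
qed

lemma sum_escapes_le_card_edge_boundary:
  assumes "symmetric_set G S" "S \<subseteq> carrier G" "finite S" "K \<subseteq> carrier G" "finite K"
  shows "(\<Sum>s\<in>S. escapes G K s) \<le> card (edge_boundary G S K)"
proof -
  let ?P = "SIGMA s:S. {y\<in>K. y \<otimes> s \<notin> K}"
  have "(\<Sum>s\<in>S. escapes G K s) = card ?P"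
    using assms(3,5) by (simp add: escapes_def)
  also have "\<dots> \<le> card (edge_boundary G S K)"
  proof (rule card_inj_on_le[where f = "\<lambda>(s, y). {y, y \<otimes> s}"])
    show "inj_on (\<lambda>(s, y). {y, y \<otimes> s}) ?P"
    proof (rule inj_onI, clarsimp)
      fix s y s' y'
      assume h: "s \<in> S" "y \<in> K" "y \<otimes> s \<notin> K" "s' \<in> S" "y' \<in> K" "y' \<otimes> s' \<notin> K"
        "{y, y \<otimes> s} = {y', y' \<otimes> s'}"
      then have "y = y'" "y \<otimes> s = y \<otimes> s'" by (auto simp: doubleton_eq_iff)
      then show "s = s' \<and> y = y'" using h assms(2,4) by (metis Units_eq Units_l_cancel subsetD)
    qed
    show "(\<lambda>(s, y). {y, y \<otimes> s}) ` ?P \<subseteq> edge_boundary G S K"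
    proof clarsimp
      fix s y assume "s \<in> S" "y \<in> K" "y \<otimes> s \<notin> K"
      then show "{y, y \<otimes> s} \<in> edge_boundary G S K"
        using assms(4) unfolding edge_boundary_def cay_edges_def by blast
    qed
    show "finite (edge_boundary G S K)"
      using finite_subset[OF edge_boundary_subset_image[OF assms(1,2)]] assms(3,5) by blast
  qed
  finally show ?thesis .
qed

end

lemma cay_ball_empty [simp]: "cay_ball G {} n = {\<one>\<^bsub>G\<^esub>}"
  unfolding cay_ball_def by auto

lemma calB_le_card_cay_ball:
  assumes "finite S" "S' \<subseteq> S" "symmetric_set G S'" "card S \<le> 2 * card S'"
  shows "calB G S n \<le> card (cay_ball G S' n)"
  unfolding calB_def
proof (rule Min_le)
  show "finite {card (cay_ball G S' n) |S'. S' \<subseteq> S \<and> symmetric_set G S' \<and> card S \<le> 2 * card S'}"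
    by (rule finite_subset[of _ "(\<lambda>S'. card (cay_ball G S' n)) ` Pow S"]) (use assms(1) in auto)
qed (use assms(2-4) in blast)

lemma calB_ge_of_Rbar_eq_enat:
  assumes "Rbar G S m = enat n"
  shows "m \<le> calB G S n"
proof -
  have ex: "\<exists>n\<ge>1. m \<le> calB G S n" and n: "n = (LEAST n. 1 \<le> n \<and> m \<le> calB G S n)"
    using assms unfolding Rbar_def by (auto split: if_splits)
  show ?thesis
    using LeastI_ex[of "\<lambda>n. 1 \<le> n \<and> m \<le> calB G S n"] ex unfolding n by auto
qed

lemma inv16_enat_le_divide:
  fixes a b e n :: nat
  assumes "0 < a * b" "a * b \<le> 16 * n * e"
  shows "inv16 (enat n) \<le> real e / (real a * real b)"
proof -
  have "0 < n" using assms by (metis gr0I mult_is_0 not_le)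
  have "real (a * b) \<le> real (16 * n * e)" using assms(2) by (simp only: of_nat_le_iff)
  then show ?thesis
    using assms(1) \<open>0 < n\<close> by (simp add: inv16_def divide_le_eq le_divide_eq mult.commute mult.left_commute)
qed

lemma (in group) card_mult_card_le_edge_boundary:
  assumes "S \<subseteq> carrier G" "finite S" "symmetric_set G S"
    and "K \<subseteq> carrier G" "finite K" "K \<noteq> {}"
    and "2 * card K \<le> calB G S n"
  shows "card K * card S \<le> 4 * n * card (edge_boundary G S K)"
proof -
  define \<Sigma> where "\<Sigma> = (\<Sum>s\<in>S. escapes G K s)"
  define S' where "S' = {s\<in>S. escapes G K s * card S \<le> 2 * \<Sigma>}"
  define B where "B = cay_ball G S' n"
  have S'S: "S' \<subseteq> S" by (auto simp: S'_def)
  have "symmetric_set G S'"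
    unfolding S'_def by (rule symmetric_set_escapes_filter[OF assms(3,1,4,5)])
  moreover have "card S \<le> 2 * card S'"
    unfolding S'_def \<Sigma>_def using assms(2) by (rule markov_card_half)
  ultimately have "calB G S n \<le> card B"
    unfolding B_def using assms(2) S'S by (intro calB_le_card_cay_ball)
  with assms(7) have large: "2 * card K \<le> card B" by (rule order_trans)
  have "0 < card K" using assms(5,6) by (simp add: card_gt_0_iff)
  with large have finB: "finite B" by (intro card_ge_0_finite) linarith
  have "S' \<subseteq> carrier G" using S'S assms(1) by (rule order_trans)
  then have BG: "B \<subseteq> carrier G"
    unfolding B_def by (rule cay_ball_subset_carrier[OF is_monoid])
  obtain g where g: "g \<in> B" "card K \<le> 2 * escapes G K g"
    using exists_escapes_ge_half[OF BG finB assms(4-6) large] by blast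
  have esc: "escapes G K g * card S \<le> n * (2 * \<Sigma>)"
    using g(1) unfolding B_def
  proof (rule escapes_ball_le)
    show "S' \<subseteq> carrier G" by fact
  qed (use assms(4,5) in \<open>auto simp: S'_def\<close>)
  have "card K * card S \<le> 2 * escapes G K g * card S" using g(2) by (rule mult_le_mono1)
  also have "\<dots> = 2 * (escapes G K g * card S)" by (simp only: mult.assoc)
  also have "\<dots> \<le> 2 * (n * (2 * \<Sigma>))" using esc by (rule mult_le_mono2)
  also have "\<dots> = 4 * n * \<Sigma>" by simp
  also have "\<dots> \<le> 4 * n * card (edge_boundary G S K)"
    unfolding \<Sigma>_def using sum_escapes_le_card_edge_boundary[OF assms(3,1,2,4,5)] by (rule mult_le_mono2)
  finally show ?thesis .
qed

theorem lemma3p4: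
  fixes G :: "('a, 'b) monoid_scheme" and S K :: "'a set"
  assumes "group G"
    and "S \<subseteq> carrier G" and "finite S" and "symmetric_set G S"
    and "generate G S = carrier G"
    and "K \<subseteq> carrier G" and "finite K" and "K \<noteq> {}"
  shows "real (card (edge_boundary G S K)) / (real (card S) * real (card K))
           \<ge> inv16 (Rbar G S (2 * card K))"
proof (cases "Rbar G S (2 * card K)")
  case infinity
  then show ?thesis by (simp add: inv16_def)
next
  case (enat n)
  interpret group G by fact
  have calB: "2 * card K \<le> calB G S n" using calB_ge_of_Rbar_eq_enat[OF enat] .
  have K: "0 < card K" using assms(7,8) by (simp add: card_gt_0_iff)
  have "S \<noteq> {}"
  proof
    assume "S = {}"
    then have "calB G S n \<le> card (cay_ball G {} n)"
      by (intro calB_le_card_cay_ball) (auto simp: symmetric_set_def)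
    with calB K show False by simp
  qed
  with K assms(3) have "0 < card S * card K" by (simp add: card_gt_0_iff)
  moreover have "card K * card S \<le> 4 * n * card (edge_boundary G S K)"
    using card_mult_card_le_edge_boundary assms(2-4,6-8) calB by blast
  then have "card S * card K \<le> 16 * n * card (edge_boundary G S K)"
    by (simp add: mult.commute)
  ultimately show ?thesis unfolding enat by (rule inv16_enat_le_divide)
qed

end
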